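(* Let $\mathcal{X}$ be a nonempty closed domain set whose closed convex hull $\operatorname{clconv}(\mathcal{X})$ contains no line, and let $0\le\tilde m\le m$ be integers. Suppose that $F+\widehat F\subseteq\mathcal{X}$ for every face $F$ of $\operatorname{clconv}(\mathcal{X})$ of dimension at most $\tilde m$ and every face $\widehat F$ of the recession cone $\operatorname{rec}(\operatorname{clconv}(\mathcal{X}))$ of dimension at most $\tilde m+1$. Then for every matrix $A_0$ and every system of $m$ LMIs of dimension $\tilde m$, $\mathbf{V}_{\mathrm{opt}}=\mathbf{V}_{\mathrm{rel}}$.
   Context: Let $\mathcal{Q}$ be one of $\mathbb{S}^n_+$, $\mathbb{S}^n$ or $\mathbb{R}^{n\times p}$, where $k\le n\le p$ are positive integers, with trace inner product $\langle A,X\rangle=\operatorname{tr}(A^\top X)$. A domain set is a set $\mathcal{X}=\{X\in\mathcal{Q}:\operatorname{rank}(X)\le k,\ F_j(X)\le0\ \forall j\in[t]\}$ with each $F_j:\mathcal{Q}\to\mathbb{R}$ continuous. A system of $m$ LMIs consists of matrices $A_1,\dots,A_m$ (same size as elements of $\mathcal{Q}$, possibly non-symmetric) and bounds $-\infty\le b_i^l\le b_i^u\le+\infty$; its dimension is $\dim\operatorname{span}\{A_1,\dots,A_m\}$. Set $\mathcal{C}=\{X\in\mathcal{X}: b_i^l\le\langle A_i,X\rangle\le b_i^u\ \forall i\}$, $\mathcal{C}_{\mathrm{rel}}=\{X\in\operatorname{clconv}(\mathcal{X}): b_i^l\le\langle A_i,X\rangle\le b_i^u\ \forall i\}$, and for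 an objective matrix $A_0$, $\mathbf{V}_{\mathrm{opt}}=\inf_{X\in\mathcal{C}}\langle A_0,X\rangle$ (the rank-constrained problem) and $\mathbf{V}_{\mathrm{rel}}=\inf_{X\in\mathcal{C}_{\mathrm{rel}}}\langle A_0,X\rangle$ (its Dantzig–Wolfe relaxation). A face of a closed convex set $D$ is a convex $F\subseteq D$ such that any segment $[a,b]\subseteq D$ whose open part meets $F$ lies in $F$; its dimension is that of its affine hull. $\operatorname{rec}(D)=\{d: x+td\in D\ \forall x\in D,\ t\ge0\}$. *)

theory Defs
  imports "HOL-Analysis.Analysis" "HOL-Library.Extended_Real"
begin

text \<open>Matrices of size n x p are elements of real^'p^'n (entry (i,j) is X $ i $ j).
  The inner product on this type is the trace inner product
  X \<bullet> Y = (\<Sum>i j. X$i$j * Y$i$j) = tr(X^T Y).\<close>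

definition sym_mats :: "(real^'n^'n) set" where
  "sym_mats = {X. transpose X = X}"

definition psd_mats :: "(real^'n^'n) set" where
  "psd_mats = {X. transpose X = X \<and> (\<forall>v. 0 \<le> v \<bullet> (X *v v))}"

definition is_domain_set :: "(real^'p^'n) set \<Rightarrow> nat \<Rightarrow> (real^'p^'n) set \<Rightarrow> bool" where
  "is_domain_set Q k XX \<longleftrightarrow>
     (\<exists>(t::nat) (F :: nat \<Rightarrow> real^'p^'n \<Rightarrow> real).
        (\<forall>j<t. continuous_on Q (F j)) \<and>
        XX = {X \<in> Q. rank X \<le> k \<and> (\<forall>j<t. F j X \<le> 0)})"

definition rec_cone :: "('a::real_vector) set \<Rightarrow> 'a set" where
  "rec_cone D = {d. \<forall>x\<in>D. \<forall>t::real. t \<ge> 0 \<longrightarrow> x + t *\<^sub>R d \<in> D}"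

definition contains_line :: "('a::real_vector) set \<Rightarrow> bool" where
  "contains_line D \<longleftrightarrow> (\<exists>x d. d \<noteq> 0 \<and> (\<forall>t::real. x + t *\<^sub>R d \<in> D))"

definition set_plus_Mink :: "('a::real_vector) set \<Rightarrow> 'a set \<Rightarrow> 'a set" where
  "set_plus_Mink F G = {x + y | x y. x \<in> F \<and> y \<in> G}"

definition lmi_feasible ::
  "('a::real_inner) set \<Rightarrow> nat \<Rightarrow> (nat \<Rightarrow> 'a) \<Rightarrow> (nat \<Rightarrow> ereal) \<Rightarrow> (nat \<Rightarrow> ereal) \<Rightarrow> 'a set" where
  "lmi_feasible S m A bl bu =
     {X \<in> S. \<forall>i<m. bl i \<le> ereal (A i \<bullet> X) \<and> ereal (A i \<bullet> X) \<le> bu i}"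

definition V_opt ::
  "('a::real_inner) set \<Rightarrow> 'a \<Rightarrow> nat \<Rightarrow> (nat \<Rightarrow> 'a) \<Rightarrow> (nat \<Rightarrow> ereal) \<Rightarrow> (nat \<Rightarrow> ereal) \<Rightarrow> ereal" where
  "V_opt XX A0 m A bl bu = (INF X \<in> lmi_feasible XX m A bl bu. ereal (A0 \<bullet> X))"

definition V_rel ::
  "('a::{real_inner}) set \<Rightarrow> 'a \<Rightarrow> nat \<Rightarrow> (nat \<Rightarrow> 'a) \<Rightarrow> (nat \<Rightarrow> ereal) \<Rightarrow> (nat \<Rightarrow> ereal) \<Rightarrow> ereal" where
  "V_rel XX A0 m A bl bu = (INF X \<in> lmi_feasible (closure (convex hull XX)) m A bl bu. ereal (A0 \<bullet> X))"

definition theorem6_claim :: "(real^'p^'n) set \<Rightarrow> nat \<Rightarrow> bool" where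
  "theorem6_claim Q k \<longleftrightarrow>
    (\<forall>(XX :: (real^'p^'n) set) (m::nat) (mt::nat).
       is_domain_set Q k XX \<and> XX \<noteq> {} \<and> closed XX \<and>
       \<not> contains_line (closure (convex hull XX)) \<and> mt \<le> m \<and>
       (\<forall>F Fh. F face_of closure (convex hull XX) \<and> aff_dim F \<le> int mt \<and>
               Fh face_of rec_cone (closure (convex hull XX)) \<and> aff_dim Fh \<le> int mt + 1
               \<longrightarrow> set_plus_Mink F Fh \<subseteq> XX)
       \<longrightarrow> (\<forall>(A0 :: real^'p^'n) (A :: nat \<Rightarrow> real^'p^'n) (bl :: nat \<Rightarrow> ereal) bu.
              (\<forall>i<m. bl i \<le> bu i) \<and> dim (span (A ` {..<m})) = mt
              \<longrightarrow> V_opt XX A0 m A bl bu = V_rel XX A0 m A bl bu))"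

end

theory Submission
  imports Defs
begin

text \<open>Let Y be feasible for the relaxation over D = clconv X and let M be the common kernel of the
  A_i, a subspace of codimension mt; moving within Y + M keeps all LMI values. If A_0 is nonnegative
  on the recession directions in M, descend from Y: inside a face G of D of dimension greater than
  mt the direction space of G meets M, and since D contains no line one of the two rays along such
  a direction leaves G without increasing A_0; it leaves G through a face of lower dimension. This
  ends in a face F of dimension at most mt. Otherwise the same descent inside rec D, with A_0 added
  to the kernel, gives a direction r with A_0 r < 0 in a face of rec D of dimension at most mt + 1,
  and e + t r is good for a point e of a low-dimensional face of D and t large. Either way the point
  found lies in some F + F' contained in X, so the rank-constrained value equals the relaxed one.\<close>

lemma rec_cone_zero: "0 \<in> rec_cone S"
  by (simp add: rec_cone_def)

lemma cone_rec_cone: "cone (rec_cone S)"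
  unfolding cone_def rec_cone_def by (simp add: scaleR_scaleR)

lemma rec_cone_add: "x \<in> S \<Longrightarrow> d \<in> rec_cone S \<Longrightarrow> x + d \<in> S"
  unfolding rec_cone_def by (metis (no_types, lifting) mem_Collect_eq order_refl scaleR_one zero_le_one)

lemma convex_rec_cone:
  assumes "convex S"
  shows "convex (rec_cone S)"
  unfolding convex_def
proof (intro ballI allI impI)
  fix d1 d2 and u v :: real
  assume d: "d1 \<in> rec_cone S" "d2 \<in> rec_cone S" and uv: "0 \<le> u" "0 \<le> v" "u + v = 1"
  show "u *\<^sub>R d1 + v *\<^sub>R d2 \<in> rec_cone S"
    unfolding rec_cone_def
  proof (intro CollectI ballI allI impI)
    fix x t assume x: "x \<in> S" and t: "(0::real) \<le> t"
    have "u *\<^sub>R (x + t *\<^sub>R d1) + v *\<^sub>R (x + t *\<^sub>R d2) \<in> S"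
      using convexD[OF assms, of "x + t *\<^sub>R d1" "x + t *\<^sub>R d2" u v] d x t uv
      by (auto simp: rec_cone_def)
    moreover have "u *\<^sub>R (x + t *\<^sub>R d1) + v *\<^sub>R (x + t *\<^sub>R d2)
        = (u + v) *\<^sub>R x + t *\<^sub>R (u *\<^sub>R d1 + v *\<^sub>R d2)"
      by (simp add: algebra_simps)
    ultimately show "x + t *\<^sub>R (u *\<^sub>R d1 + v *\<^sub>R d2) \<in> S"
      using uv by simp
  qed
qed

lemma closed_rec_cone:
  fixes S :: "'a::real_normed_vector set"
  assumes "closed S"
  shows "closed (rec_cone S)"
proof -
  have "rec_cone S = (\<Inter>x\<in>S. \<Inter>t\<in>{t. t \<ge> 0}. (\<lambda>d. x + t *\<^sub>R d) -` S)"
    by (auto simp: rec_cone_def)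
  moreover have "closed ((\<lambda>d. x + t *\<^sub>R d) -` S)" for x t
    by (intro continuous_closed_vimage assms) (auto intro!: continuous_intros)
  ultimately show ?thesis
    by (auto intro!: closed_INT)
qed

lemma not_contains_line_rec_cone:
  assumes "S \<noteq> {}" "\<not> contains_line S"
  shows "\<not> contains_line (rec_cone S)"
proof
  assume "contains_line (rec_cone S)"
  then obtain z d where d: "d \<noteq> 0" "\<And>t. z + t *\<^sub>R d \<in> rec_cone S"
    by (auto simp: contains_line_def)
  obtain x where x: "x \<in> S"
    using assms by blast
  have "(x + z) + t *\<^sub>R d \<in> S" for t
    using rec_cone_add[OF x d(2)[of t]] by (simp add: add.assoc)
  then show False
    using assms(2) d(1) by (auto simp: contains_line_def)
qed

lemma mem_rec_cone_if_ray_in: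
  fixes S :: "'a::real_normed_vector set"
  assumes "closed S" "convex S" "y \<in> S" "\<And>t. t \<ge> 0 \<Longrightarrow> y + t *\<^sub>R e \<in> S"
  shows "e \<in> rec_cone S"
  unfolding rec_cone_def
proof (intro CollectI ballI allI impI)
  fix x t assume x: "x \<in> S" and t: "(0::real) \<le> t"
  \<comment> \<open>x + t e is the limit of points on the segments from x to y + s e as s grows.\<close>
  define w where "w n = t / ((t + 1) + real n)" for n
  define f where "f n = x + t *\<^sub>R e + w n *\<^sub>R (y - x)" for n
  have fS: "f n \<in> S" for n
  proof -
    define s where "s = (t + 1) + real n"
    have s: "s > 0" "t / s \<le> 1" "w n = t / s"
      using t by (auto simp: s_def w_def)
    have "(1 - t/s) *\<^sub>R x + (t/s) *\<^sub>R (y + s *\<^sub>R e) \<in> S"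
      by (rule convexD[OF assms(2) x assms(4)]) (use s t in auto)
    moreover have "(1 - t/s) *\<^sub>R x + (t/s) *\<^sub>R (y + s *\<^sub>R e) = f n"
      using s by (simp add: f_def algebra_simps)
    ultimately show ?thesis
      by simp
  qed
  have "w \<longlonglongrightarrow> 0"
    unfolding w_def
    by (intro real_tendsto_divide_at_top[OF tendsto_const] filterlim_tendsto_add_at_top[OF tendsto_const]
        filterlim_real_sequentially)
  then have "f \<longlonglongrightarrow> x + t *\<^sub>R e + 0 *\<^sub>R (y - x)"
    unfolding f_def by (intro tendsto_intros)
  then show "x + t *\<^sub>R e \<in> S"
    using closed_sequentially[OF assms(1)] fS by auto
qed

lemma zero_face_of_cone:
  assumes "cone K" "0 \<in> K" "\<not> contains_line K"
  shows "{0} face_of K"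
  unfolding face_of_singleton extreme_point_of_def
proof (intro conjI ballI notI assms(2))
  fix a b assume "a \<in> K" "b \<in> K" "0 \<in> open_segment a b"
  then obtain u where ab: "a \<in> K" "b \<in> K" "a \<noteq> b" "0 < u" "u < 1"
    and zero: "(1 - u) *\<^sub>R a + u *\<^sub>R b = 0"
    by (auto simp: in_segment)
  have "a \<noteq> 0"
    using ab zero by auto
  have "- a = (1 / (1 - u)) *\<^sub>R (- ((1 - u) *\<^sub>R a))"
    using ab(5) by simp
  also have "\<dots> = (u / (1 - u)) *\<^sub>R b"
    using zero by (simp add: add_eq_0_iff2)
  finally have "- a = (u / (1 - u)) *\<^sub>R b" .
  then have "- a \<in> K"
    using ab(2,4,5) assms(1) by (simp add: cone_def)
  have "t *\<^sub>R a \<in> K" for t :: real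
  proof (cases "t \<ge> 0")
    case True
    then show ?thesis using ab(1) assms(1) by (simp add: cone_def)
  next
    case False
    then have "(- t) *\<^sub>R (- a) \<in> K"
      using \<open>- a \<in> K\<close> assms(1) unfolding cone_def by (meson less_eq_real_def neg_0_less_iff_less not_le)
    then show ?thesis by simp
  qed
  then have "\<forall>t. 0 + t *\<^sub>R a \<in> K"
    by simp
  then show False
    using assms(3) \<open>a \<noteq> 0\<close> unfolding contains_line_def by blast
qed

lemma face_of_cone_scaleR:
  assumes K: "cone K" and F: "F face_of K" and r: "r \<in> F" and t: "t \<ge> 0"
  shows "t *\<^sub>R r \<in> F"
proof (cases "r = 0")
  case True
  then show ?thesis using r by simp
next
  case False
  define s where "s = t + 2"
  have s: "s > 1" "t \<le> s"
    using t by (auto simp: s_def)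
  have "r \<in> K"
    using F r face_of_imp_subset by blast
  then have "0 \<in> K" "s *\<^sub>R r \<in> K"
    using K s cone_contains_0 by (auto simp: cone_def)
  moreover have "r \<in> open_segment 0 (s *\<^sub>R r)"
  proof -
    have "r = (1 - 1/s) *\<^sub>R 0 + (1/s) *\<^sub>R (s *\<^sub>R r)" "0 \<noteq> s *\<^sub>R r"
      using s False by auto
    then show ?thesis
      using s unfolding in_segment by (intro conjI exI[of _ "1/s"]) auto
  qed
  ultimately have "closed_segment 0 (s *\<^sub>R r) \<subseteq> F"
    using face_ofD[OF F _ _ _ r] face_of_imp_convex[OF F] by (simp add: closed_segment_subset)
  moreover have "t *\<^sub>R r \<in> closed_segment 0 (s *\<^sub>R r)"
  proof -
    have "t *\<^sub>R r = (1 - t/s) *\<^sub>R 0 + (t/s) *\<^sub>R (s *\<^sub>R r)"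
      using s by simp
    then show ?thesis
      using s t unfolding in_segment by (intro exI[of _ "t/s"]) auto
  qed
  ultimately show ?thesis
    by blast
qed

lemma orthogonal_comp_span: "(span B)\<^sup>\<bottom> = B\<^sup>\<bottom>"
proof
  show "(span B)\<^sup>\<bottom> \<subseteq> B\<^sup>\<bottom>"
    by (simp add: orthogonal_comp_anti_mono span_superset)
  show "B\<^sup>\<bottom> \<subseteq> (span B)\<^sup>\<bottom>"
  proof
    fix x assume "x \<in> B\<^sup>\<bottom>"
    then have "orthogonal x b" if "b \<in> B" for b
      using that orthogonal_commute by (auto simp: orthogonal_comp_def)
    then have "orthogonal x a" if "a \<in> span B" for a
      using that orthogonal_to_span by blast
    then show "x \<in> (span B)\<^sup>\<bottom>"
      using orthogonal_commute by (auto simp: orthogonal_comp_def)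
  qed
qed

lemma dim_orthogonal_comp:
  fixes W :: "'a::euclidean_space set"
  assumes "subspace W"
  shows "dim (W\<^sup>\<bottom>) + dim W = DIM('a)"
  using dim_subspace_orthogonal_to_vectors[OF assms subspace_UNIV subset_UNIV]
  by (simp add: orthogonal_comp_def)

lemma ray_exits_through_lower_face:
  fixes G :: "'a::euclidean_space set"
  assumes G: "closed G" "convex G" and y: "y \<in> G"
    and aff: "\<And>t. y + t *\<^sub>R u \<in> affine hull G"
    and t1: "t1 \<ge> 0" "y + t1 *\<^sub>R u \<notin> G"
  obtains s G' where "s \<ge> 0" "y + s *\<^sub>R u \<in> G'" "G' face_of G" "aff_dim G' < aff_dim G"
proof -
  \<comment> \<open>The last point of the segment from y to y + t1 u that lies in G is on the relative
    boundary of G, and a supporting hyperplane there cuts out the face.\<close>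
  define T where "T = {0..t1} \<inter> (\<lambda>s. y + s *\<^sub>R u) -` G"
  have "closed ((\<lambda>s. y + s *\<^sub>R u) -` G)"
    by (intro continuous_closed_vimage G(1)) (auto intro!: continuous_intros)
  then have "compact T"
    unfolding T_def by (intro compact_Int_closed) auto
  moreover have "0 \<in> T"
    using y t1 by (auto simp: T_def)
  ultimately obtain s where sT: "s \<in> T" and smax: "\<And>s'. s' \<in> T \<Longrightarrow> s' \<le> s"
    using compact_attains_sup[of T] by blast
  have s0: "s \<ge> 0" and st1: "s < t1" and ys: "y + s *\<^sub>R u \<in> G"
    using sT t1 by (auto simp: T_def less_le)
  have u0: "u \<noteq> 0"
    using t1 y by auto
  have "y + s *\<^sub>R u \<notin> rel_interior G"
  proof
    assume "y + s *\<^sub>R u \<in> rel_interior G"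
    then obtain e where e: "e > 0" "ball (y + s *\<^sub>R u) e \<inter> affine hull G \<subseteq> G"
      using mem_rel_interior_ball by blast
    define d where "d = min (t1 - s) (e / (2 * norm u))"
    have d: "d > 0" "d \<le> t1 - s"
      using st1 e u0 by (auto simp: d_def)
    have "d * norm u \<le> (e / (2 * norm u)) * norm u"
      using u0 by (intro mult_right_mono) (auto simp: d_def)
    also have "\<dots> < e"
      using u0 e by simp
    finally have "y + (s + d) *\<^sub>R u \<in> ball (y + s *\<^sub>R u) e"
      using d by (simp add: dist_norm algebra_simps)
    then have "s + d \<in> T"
      using e aff d s0 by (auto simp: T_def)
    then show False
      using smax d by fastforce
  qed
  then obtain a where a: "a \<noteq> 0" "\<And>z. z \<in> G \<Longrightarrow> a \<bullet> (y + s *\<^sub>R u) \<le> a \<bullet> z"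
    "\<And>z. z \<in> rel_interior G \<Longrightarrow> a \<bullet> (y + s *\<^sub>R u) < a \<bullet> z"
    using supporting_hyperplane_rel_boundary[OF G(2) ys] by blast
  define G' where "G' = G \<inter> {z. a \<bullet> z = a \<bullet> (y + s *\<^sub>R u)}"
  have face: "G' face_of G"
    unfolding G'_def by (rule face_of_Int_supporting_hyperplane_ge) (use G a in auto)
  obtain w where "w \<in> rel_interior G"
    using rel_interior_eq_empty G y by blast
  then have "w \<in> G - G'"
    using a(3) rel_interior_subset by (force simp: G'_def)
  then have "aff_dim G' < aff_dim G"
    using face_of_aff_dim_lt G face by blast
  moreover have "y + s *\<^sub>R u \<in> G'"
    using ys by (simp add: G'_def)
  ultimately show ?thesis
    using that s0 face by blast
qed

lemma subspace_meets_affine_hull_directions: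
  fixes G :: "'a::euclidean_space set"
  assumes y: "y \<in> G" and dimG: "aff_dim G > int n"
    and M: "subspace M" "DIM('a) \<le> dim M + n"
  obtains e where "e \<in> M" "e \<noteq> 0" "\<And>t. y + t *\<^sub>R e \<in> affine hull G"
proof -
  define V where "V = span ((+) (- y) ` G)"
  have yaff: "y \<in> affine hull G"
    by (rule hull_inc[OF y])
  have "aff_dim G = int (dim V)"
    using aff_dim_eq_dim[OF yaff] by (simp add: V_def dim_span)
  then have "dim V > n"
    using dimG by simp
  moreover have "dim {x + z |x z. x \<in> V \<and> z \<in> M} + dim (V \<inter> M) = dim V + dim M"
    by (rule dim_sums_Int) (auto simp: V_def M)
  moreover have "dim {x + z |x z. x \<in> V \<and> z \<in> M} \<le> DIM('a)"
    by (rule dim_subset_UNIV)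
  ultimately have "dim (V \<inter> M) \<noteq> 0"
    using M(2) by linarith
  then obtain e where e: "e \<in> V" "e \<in> M" "e \<noteq> 0"
    by (auto simp: dim_eq_0)
  have "y + t *\<^sub>R e \<in> affine hull G" for t
    using affine_hull_span_gen[OF yaff] e(1) by (auto simp: V_def span_mul)
  then show ?thesis
    using that e by blast
qed

text \<open>Of the two rays from y along \<open>\<pm>e\<close>, one leaves G without increasing c: a ray that stays
  in G is a recession direction, on which c is nonnegative, and not both rays stay in G as S
  contains no line.\<close>
lemma descending_ray_leaves_face:
  fixes S :: "'a::euclidean_space set"
  assumes S: "closed S" "convex S" "\<not> contains_line S"
    and G: "G face_of S" "y \<in> G"
    and e: "e \<in> M" "e \<noteq> 0" and M: "subspace M"
    and cpos: "\<And>d. d \<in> M \<Longrightarrow> d \<in> rec_cone S \<Longrightarrow> c \<bullet> d \<ge> 0"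
  obtains u t1 where "u \<in> {e, - e}" "c \<bullet> u \<le> 0" "t1 \<ge> 0" "y + t1 *\<^sub>R u \<notin> G"
proof -
  have GS: "G \<subseteq> S"
    using G(1) face_of_imp_subset by blast
  have leaves_if_descending: "\<exists>t1\<ge>0. y + t1 *\<^sub>R u \<notin> G" if "u \<in> {e, - e}" "c \<bullet> u < 0" for u
  proof (rule ccontr)
    assume "\<not> ?thesis"
    then have "u \<in> rec_cone S"
      using mem_rec_cone_if_ray_in[OF S(1,2)] G(2) GS by blast
    moreover have "u \<in> M"
      using that(1) e(1) M by (auto intro: subspace_neg)
    ultimately show False
      using cpos that(2) by force
  qed
  have some_leaves: "\<exists>u\<in>{e, - e}. \<exists>t1\<ge>0. y + t1 *\<^sub>R u \<notin> G"
  proof (rule ccontr)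
    assume "\<not> ?thesis"
    then have stays: "y + t *\<^sub>R u \<in> G" if "u \<in> {e, - e}" "t \<ge> 0" for u t
      using that by blast
    have "y + t *\<^sub>R e \<in> G" for t
    proof (cases "t \<ge> 0")
      case True
      then show ?thesis using stays by blast
    next
      case False
      then show ?thesis using stays[of "- e" "- t"] by simp
    qed
    then show False
      using S(3) e(2) GS unfolding contains_line_def by blast
  qed
  consider "c \<bullet> e = 0" | "c \<bullet> e < 0" | "c \<bullet> (- e) < 0"
    using inner_minus_right[of c e] by linarith
  then show ?thesis
  proof cases
    case 1
    obtain u t1 where "u \<in> {e, - e}" "t1 \<ge> 0" "y + t1 *\<^sub>R u \<notin> G"
      using some_leaves by blast
    moreover from this(1) 1 have "c \<bullet> u \<le> 0"
      by auto
    ultimately show ?thesis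
      using that by blast
  next
    case 2
    then show ?thesis
      using leaves_if_descending[of e] that[of e] by force
  next
    case 3
    then show ?thesis
      using leaves_if_descending[of "- e"] that[of "- e"] by force
  qed
qed

lemma descend_to_low_dim_face:
  fixes S :: "'a::euclidean_space set"
  assumes S: "closed S" "convex S" "\<not> contains_line S"
    and M: "subspace M" "DIM('a) \<le> dim M + n"
    and cpos: "\<And>d. d \<in> M \<Longrightarrow> d \<in> rec_cone S \<Longrightarrow> c \<bullet> d \<ge> 0"
  shows "G face_of S \<Longrightarrow> y \<in> G \<Longrightarrow>
    \<exists>F z. F face_of S \<and> aff_dim F \<le> int n \<and> z \<in> F \<and> z - y \<in> M \<and> c \<bullet> z \<le> c \<bullet> y"
proof (induction "nat (aff_dim G + 1)" arbitrary: G y rule: less_induct)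
  case less
  note GS = less.prems(1) and y = less.prems(2)
  show ?case
  proof (cases "aff_dim G \<le> int n")
    case True
    then show ?thesis
      using GS y subspace_0[OF M(1)] by (intro exI[of _ G] exI[of _ y]) simp
  next
    case False
    then have "aff_dim G > int n"
      by simp
    then obtain e where e: "e \<in> M" "e \<noteq> 0" "\<And>t. y + t *\<^sub>R e \<in> affine hull G"
      using subspace_meets_affine_hull_directions[OF y _ M] by blast
    obtain u t1 where u: "u \<in> {e, - e}" "c \<bullet> u \<le> 0" "t1 \<ge> 0" "y + t1 *\<^sub>R u \<notin> G"
      using descending_ray_leaves_face[OF S GS y e(1,2) M(1) cpos] by blast
    have uM: "u \<in> M"
      using u(1) e(1) M(1) by (auto intro: subspace_neg)
    have u_aff: "y + t *\<^sub>R u \<in> affine hull G" for t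
      using u(1) e(3)[of t] e(3)[of "- t"] by auto
    have "closed G" "convex G"
      using face_of_imp_closed[OF S(2,1) GS] face_of_imp_convex[OF GS] by simp_all
    then obtain s G' where sG: "s \<ge> 0" "y + s *\<^sub>R u \<in> G'" "G' face_of G" "aff_dim G' < aff_dim G"
      using ray_exits_through_lower_face[OF _ _ y u_aff u(3,4)] by blast
    have "nat (aff_dim G' + 1) < nat (aff_dim G + 1)"
      using sG(4) aff_dim_geq[of G'] by linarith
    moreover have "G' face_of S"
      using sG(3) GS face_of_trans by blast
    ultimately obtain F z where Fz: "F face_of S" "aff_dim F \<le> int n" "z \<in> F"
      "z - (y + s *\<^sub>R u) \<in> M" "c \<bullet> z \<le> c \<bullet> (y + s *\<^sub>R u)"
      using less.hyps sG(2) by blast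
    have "z - y = (z - (y + s *\<^sub>R u)) + s *\<^sub>R u"
      by simp
    then have "z - y \<in> M"
      using Fz(4) uM M(1) by (metis subspace_add subspace_scale)
    moreover have "s * (c \<bullet> u) \<le> 0"
      by (rule mult_nonneg_nonpos[OF sG(1) u(2)])
    ultimately show ?thesis
      using Fz by (intro exI[of _ F] exI[of _ z]) (simp add: inner_add_right)
  qed
qed

lemma DIM_le_dim_orthogonal_comp:
  fixes B :: "'a::euclidean_space set"
  assumes "dim (span B) \<le> n"
  shows "DIM('a) \<le> dim (B\<^sup>\<bottom>) + n"
  using dim_orthogonal_comp[of "span B"] assms by (simp add: orthogonal_comp_span)

lemma descending_recession_direction_in_low_dim_face:
  fixes D :: "'a::euclidean_space set"
  assumes D: "closed D" "convex D" "\<not> contains_line D" "D \<noteq> {}"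
    and B: "dim (span B) \<le> n"
    and d: "d \<in> B\<^sup>\<bottom>" "d \<in> rec_cone D" "c \<bullet> d < 0"
  obtains Fh r where "Fh face_of rec_cone D" "aff_dim Fh \<le> int n + 1" "r \<in> Fh" "r \<in> B\<^sup>\<bottom>" "c \<bullet> r < 0"
proof -
  define K where "K = rec_cone D"
  have K: "closed K" "convex K" "\<not> contains_line K"
    using closed_rec_cone[OF D(1)] convex_rec_cone[OF D(2)] not_contains_line_rec_cone[OF D(4,3)]
    by (simp_all add: K_def)
  have "dim (span (insert c B)) \<le> n + 1"
    using B by (simp add: dim_span dim_insert)
  then have M: "subspace ((insert c B)\<^sup>\<bottom>)" "DIM('a) \<le> dim ((insert c B)\<^sup>\<bottom>) + (n + 1)"
    by (simp_all only: subspace_orthogonal_comp DIM_le_dim_orthogonal_comp)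
  obtain Fh r where Fr: "Fh face_of K" "aff_dim Fh \<le> int (n + 1)" "r \<in> Fh" "r - d \<in> (insert c B)\<^sup>\<bottom>"
    using descend_to_low_dim_face[OF K M, of 0 K d] face_of_refl[OF K(2)] d(2) by (auto simp: K_def)
  then have "c \<bullet> (r - d) = 0" "r - d \<in> B\<^sup>\<bottom>"
    by (auto simp: orthogonal_comp_def orthogonal_def)
  then have "c \<bullet> r < 0" "r \<in> B\<^sup>\<bottom>"
    using d subspace_add[OF subspace_orthogonal_comp[of B], of "r - d" d] by (auto simp: inner_diff_right)
  then show ?thesis
    using that Fr by (auto simp: K_def)
qed

lemma dominated_by_low_dim_face_sum:
  fixes D :: "'a::euclidean_space set"
  assumes D: "closed D" "convex D" "\<not> contains_line D" and Y: "Y \<in> D"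
    and B: "dim (span B) \<le> n"
  obtains F Fh z where "F face_of D" "aff_dim F \<le> int n"
    "Fh face_of rec_cone D" "aff_dim Fh \<le> int n + 1"
    "z \<in> set_plus_Mink F Fh" "z - Y \<in> B\<^sup>\<bottom>" "c \<bullet> z \<le> c \<bullet> Y"
proof -
  define M where "M = B\<^sup>\<bottom>"
  have M: "subspace M" "DIM('a) \<le> dim M + n"
    by (simp_all add: M_def subspace_orthogonal_comp DIM_le_dim_orthogonal_comp[OF B])
  have DD: "D face_of D"
    using face_of_refl[OF D(2)] .
  show ?thesis
  proof (cases "\<forall>d\<in>M. d \<in> rec_cone D \<longrightarrow> c \<bullet> d \<ge> 0")
    case True
    then obtain F z where "F face_of D" "aff_dim F \<le> int n" "z \<in> F" "z - Y \<in> M" "c \<bullet> z \<le> c \<bullet> Y"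
      using descend_to_low_dim_face[OF D M, of c D Y] DD Y by auto
    moreover have "{0} face_of rec_cone D"
      using zero_face_of_cone[OF cone_rec_cone rec_cone_zero not_contains_line_rec_cone[OF _ D(3)]] Y
      by blast
    moreover have "z \<in> set_plus_Mink F {0}" if "z \<in> F" for z
      using that by (force simp: set_plus_Mink_def)
    ultimately show ?thesis
      using that[of F "{0}" z] by (simp add: M_def)
  next
    case False
    \<comment> \<open>c decreases along a recession direction in M; move far enough along such a direction r
      from a point e of a low-dimensional face of D.\<close>
    then obtain d where d: "d \<in> B\<^sup>\<bottom>" "d \<in> rec_cone D" "c \<bullet> d < 0"
      by (force simp: M_def)
    obtain F e where Fe: "F face_of D" "aff_dim F \<le> int n" "e \<in> F" "e - Y \<in> M"
      using descend_to_low_dim_face[OF D M, of 0 D Y] DD Y by auto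
    obtain Fh r where Fr: "Fh face_of rec_cone D" "aff_dim Fh \<le> int n + 1" "r \<in> Fh"
      and rM: "r \<in> M" and cr: "c \<bullet> r < 0"
      using descending_recession_direction_in_low_dim_face[OF D _ B d] Y unfolding M_def by blast
    define t where "t = max 0 ((c \<bullet> Y - c \<bullet> e) / (c \<bullet> r))"
    have t: "t \<ge> 0" "t * (c \<bullet> r) \<le> c \<bullet> Y - c \<bullet> e"
      using cr by (auto simp: t_def max_def mult_le_0_iff field_simps)
    have "t *\<^sub>R r \<in> Fh"
      using face_of_cone_scaleR[OF cone_rec_cone Fr(1,3) t(1)] .
    then have "e + t *\<^sub>R r \<in> set_plus_Mink F Fh"
      using Fe(3) by (force simp: set_plus_Mink_def)
    moreover have "(e + t *\<^sub>R r) - Y \<in> M"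
      using Fe(4) rM M(1) subspace_add[of M "e - Y" "t *\<^sub>R r"] subspace_scale[of M r t]
      by (simp add: algebra_simps)
    moreover have "c \<bullet> (e + t *\<^sub>R r) \<le> c \<bullet> Y"
      using t(2) by (simp add: inner_add_right)
    ultimately show ?thesis
      using that[of F Fh "e + t *\<^sub>R r"] Fe(1,2) Fr(1,2) by (simp add: M_def)
  qed
qed

lemma lmi_feasible_if_orthogonal_shift:
  assumes "z \<in> X" "z - Y \<in> (A ` {..<m})\<^sup>\<bottom>" "Y \<in> lmi_feasible D m A bl bu"
  shows "z \<in> lmi_feasible X m A bl bu"
proof -
  have "A i \<bullet> z = A i \<bullet> Y" if "i < m" for i
    using assms(2) that by (auto simp: orthogonal_comp_def orthogonal_def inner_diff_right)
  then show ?thesis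
    using assms(1,3) by (auto simp: lmi_feasible_def)
qed

lemma V_opt_eq_V_rel_if_dominated:
  assumes "\<And>Y. Y \<in> lmi_feasible (closure (convex hull X)) m A bl bu \<Longrightarrow>
      \<exists>z\<in>lmi_feasible X m A bl bu. A0 \<bullet> z \<le> A0 \<bullet> Y"
  shows "V_opt X A0 m A bl bu = V_rel X A0 m A bl bu"
proof (rule antisym)
  show "V_opt X A0 m A bl bu \<le> V_rel X A0 m A bl bu"
    unfolding V_rel_def
  proof (rule INF_greatest)
    fix Y assume "Y \<in> lmi_feasible (closure (convex hull X)) m A bl bu"
    then obtain z where "z \<in> lmi_feasible X m A bl bu" "A0 \<bullet> z \<le> A0 \<bullet> Y"
      using assms by blast
    then show "V_opt X A0 m A bl bu \<le> ereal (A0 \<bullet> Y)"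
      unfolding V_opt_def by (intro INF_lower2) auto
  qed
  have "lmi_feasible X m A bl bu \<subseteq> lmi_feasible (closure (convex hull X)) m A bl bu"
    using closure_subset hull_subset by (fastforce simp: lmi_feasible_def)
  then show "V_rel X A0 m A bl bu \<le> V_opt X A0 m A bl bu"
    unfolding V_rel_def V_opt_def by (rule INF_superset_mono) simp
qed

lemma V_opt_eq_V_rel_if_face_sums_in:
  fixes X :: "'a::euclidean_space set"
  assumes nl: "\<not> contains_line (closure (convex hull X))"
    and faces: "\<And>F Fh. F face_of closure (convex hull X) \<Longrightarrow> aff_dim F \<le> int n \<Longrightarrow>
      Fh face_of rec_cone (closure (convex hull X)) \<Longrightarrow> aff_dim Fh \<le> int n + 1 \<Longrightarrow>
      set_plus_Mink F Fh \<subseteq> X"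
    and dim: "dim (span (A ` {..<m})) = n"
  shows "V_opt X A0 m A bl bu = V_rel X A0 m A bl bu"
proof (rule V_opt_eq_V_rel_if_dominated)
  fix Y assume Y: "Y \<in> lmi_feasible (closure (convex hull X)) m A bl bu"
  have "closed (closure (convex hull X))" "convex (closure (convex hull X))"
    by (simp_all add: convex_closure)
  then obtain F Fh z where "F face_of closure (convex hull X)" "aff_dim F \<le> int n"
    "Fh face_of rec_cone (closure (convex hull X))" "aff_dim Fh \<le> int n + 1"
    and z: "z \<in> set_plus_Mink F Fh" "z - Y \<in> (A ` {..<m})\<^sup>\<bottom>" "A0 \<bullet> z \<le> A0 \<bullet> Y"
    using dominated_by_low_dim_face_sum[OF _ _ nl, of Y "A ` {..<m}" n A0] Y dim
    by (auto simp: lmi_feasible_def)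
  then have "z \<in> X"
    using faces by blast
  then show "\<exists>z\<in>lmi_feasible X m A bl bu. A0 \<bullet> z \<le> A0 \<bullet> Y"
    using lmi_feasible_if_orthogonal_shift[OF _ z(2) Y] z(3) by blast
qed

lemma theorem6_claim_holds: "theorem6_claim Q k"
  unfolding theorem6_claim_def using V_opt_eq_V_rel_if_face_sums_in by blast

theorem theorem6:
  fixes k :: nat
  assumes "0 < k" and "k \<le> CARD('n)"
  shows "theorem6_claim (psd_mats :: (real^'n^'n) set) k
       \<and> theorem6_claim (sym_mats :: (real^'n^'n) set) k
       \<and> (CARD('n) \<le> CARD('p) \<longrightarrow> theorem6_claim (UNIV :: (real^'p^'n) set) k)"
  by (simp add: theorem6_claim_holds)

end
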